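(* Let $(G,+)$ be a finite abelian group, $(p_g)_{g\in G}\subset(0,1)$ with $\sum_gp_g=1$, $\Omega=G^{\mathbb N}$, $\mathbb P$ the Bernoulli measure $\mathbb P[g_0,\dots,g_{n-1}]=\prod_{j<n}p_{g_j}$, $N\ge2$ an integer, $\Phi:\Omega\to\Omega$ given by $(\Phi\omega)_j=\omega_j+\dots+\omega_{j+N-1}$, and $\mathbb P_0=\mathbb P\circ\Phi^{-1}$. Then: (a) $\mathbb P_0$ is $T$-invariant; (b) $\mathbb P_0$ is ψ-mixing; (c) if there exists $h\in G$ with $p_h>p_g$ for all $g\in G\setminus\{h\}$, then there exists $s\in G$ such that, for the constant sequence $\omega$ with $\omega_j=s$ for all $j\ge0$, the limit $\lim_{n\to\infty}\mathbb P_0(A^\omega_{n+1}\mid A^\omega_n)$ does not exist.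
   Context: $T$ is the left shift on $G^{\mathbb N}$; cylinders $[g_0,\dots,g_{n-1}]=\{\omega:\omega_j=g_j,0\le j<n\}$; $A^\omega_n=[\omega_0,\dots,\omega_{n-1}]$. A probability measure $Q$ on $G^{\mathbb N}$ (with the σ-algebra $\mathcal F$ generated by coordinates) is ψ-mixing if there is a sequence $\psi_m\ge0$ with $\psi_m\to0$ such that $|Q(E\cap T^{-(n+m)}F)-Q(E)Q(F)|\le\psi_mQ(E)Q(F)$ for all $m,n\in\mathbb N$, $E$ in the σ-algebra generated by coordinates $0,\dots,n-1$, and $F\in\mathcal F$. *)

theory Defs
  imports "HOL-Probability.Probability"
begin

abbreviation SeqSp :: "(nat \<Rightarrow> 'g) measure" where
  "SeqSp \<equiv> Pi\<^sub>M UNIV (\<lambda>_. count_space UNIV)"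

definition shift :: "(nat \<Rightarrow> 'g) \<Rightarrow> (nat \<Rightarrow> 'g)" where
  "shift \<omega> = (\<lambda>j. \<omega> (Suc j))"

definition cylinder :: "'g list \<Rightarrow> (nat \<Rightarrow> 'g) set" where
  "cylinder gs = {\<omega>. \<forall>j < length gs. \<omega> j = gs ! j}"

definition cyl_of :: "(nat \<Rightarrow> 'g) \<Rightarrow> nat \<Rightarrow> (nat \<Rightarrow> 'g) set" where
  "cyl_of \<omega> n = {\<omega>'. \<forall>j < n. \<omega>' j = \<omega> j}"

definition coord_sigma :: "nat \<Rightarrow> (nat \<Rightarrow> 'g) set set" where
  "coord_sigma n = sigma_sets UNIV {{\<omega>. \<omega> i \<in> A} | i A. i < n}"

definition psi_mixing :: "(nat \<Rightarrow> 'g) measure \<Rightarrow> bool" where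
  "psi_mixing Q \<longleftrightarrow> (\<exists>\<psi> :: nat \<Rightarrow> real. (\<forall>m. \<psi> m \<ge> 0) \<and> \<psi> \<longlonglongrightarrow> 0 \<and>
     (\<forall>m n E F. E \<in> coord_sigma n \<and> F \<in> sets SeqSp \<longrightarrow>
        \<bar>measure Q (E \<inter> (shift ^^ (n + m)) -` F) - measure Q E * measure Q F\<bar>
          \<le> \<psi> m * measure Q E * measure Q F))"

definition block_sum :: "nat \<Rightarrow> (nat \<Rightarrow> 'g::comm_monoid_add) \<Rightarrow> (nat \<Rightarrow> 'g)" where
  "block_sum N \<omega> = (\<lambda>j. \<Sum>i<N. \<omega> (j + i))"

end

theory Submission
  imports Defs
begin

(*
  (a) Bernoulli measures are shift invariant and Phi commutes with the shift T, so
      P0 is T-invariant.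
  (b) The first n coordinates of Phi w depend only on the first n + N - 1 coordinates of w.
      For P, an event about coordinates 0..<K is independent of T^-k F when k >= K, and for
      k < K the dependence is bounded by the factor c^-(K-k), c = min p.  Hence P0 is
      psi-mixing with psi_m = c^-(N-1) for m < N - 1 and psi_m = 0 afterwards.
  (c) A word of length n + N - 1 has all n block sums equal to s iff it is the periodic
      continuation of a word of length N with sum s.  Taking s = (N-1)h + g, where h is the
      heaviest and g the second heaviest letter, the dominant such periods are the N words
      h..hgh..h; so P0[s,...,s] of length qN + t + 1 behaves like W^(q+1) c_t.  The ratios
      P0(A_(n+1))/P0(A_n) therefore tend to c_1/c_0 along n = 1 (mod N) and to c_2/c_1 along
      n = 2 (mod N), and c_1^2 - c_0 c_2 = (p h - p g)^2 > 0 makes these limits differ.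
*)

section \<open>Prefix words and cylinders\<close>

text \<open>Events of the form
  \<open>{\<omega>. prefix_word \<omega> K \<in> A}\<close> are exactly the events determined by coordinates \<open>0..<K\<close>.\<close>
definition prefix_word :: "(nat \<Rightarrow> 'g) \<Rightarrow> nat \<Rightarrow> 'g list" where
  "prefix_word \<omega> K = map \<omega> [0..<K]"

lemma length_prefix_word [simp]: "length (prefix_word \<omega> K) = K"
  by (simp add: prefix_word_def)

lemma nth_prefix_word [simp]: "j < K \<Longrightarrow> prefix_word \<omega> K ! j = \<omega> j"
  by (simp add: prefix_word_def)

lemma space_SeqSp [simp]: "space SeqSp = UNIV"
  by (simp add: space_PiM)

lemma cylinder_eq_prefix: "cylinder w = {\<omega>. prefix_word \<omega> (length w) = w}"
  by (auto simp: cylinder_def list_eq_iff_nth_eq)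

lemma prefix_word_take: "k \<le> K \<Longrightarrow> prefix_word \<omega> k = take k (prefix_word \<omega> K)"
  by (simp add: prefix_word_def take_map)

lemma shift_power: "(shift ^^ k) \<omega> = (\<lambda>j. \<omega> (j + k))"
  by (induction k arbitrary: \<omega>) (auto simp: shift_def)

lemma prefix_word_add: "prefix_word \<omega> (k + l) = prefix_word \<omega> k @ prefix_word ((shift ^^ k) \<omega>) l"
  by (auto simp: list_eq_iff_nth_eq nth_append shift_power add.commute)

lemma finite_words_length: "finite {w :: 'g::finite list. length w = K}"
  using finite_lists_length_eq[of "UNIV :: 'g set" K] by simp

lemma finite_words_in: "finite {w \<in> A. length w = K}" for A :: "'g::finite list set"
  by (rule finite_subset[OF _ finite_words_length[of K]]) auto

lemma prefix_event_UN: "{\<omega>. prefix_word \<omega> K \<in> A} = (\<Union>w\<in>{w \<in> A. length w = K}. cylinder w)"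
  by (auto simp: cylinder_eq_prefix)

lemma disjoint_cylinders: "disjoint_family_on cylinder {w \<in> A. length w = K}"
  by (auto simp: disjoint_family_on_def cylinder_eq_prefix)

lemma cylinder_sets: "cylinder w \<in> sets SeqSp"
proof -
  have "cylinder w = (\<Inter>j<length w. (\<lambda>\<omega>. \<omega> j) -` {w ! j} \<inter> space SeqSp)"
    by (auto simp: cylinder_def)
  also have "\<dots> \<in> sets SeqSp"
    using sets.top[of "SeqSp :: (nat \<Rightarrow> 'g) measure"]
    by (intro sets.countable_INT'' measurable_sets[OF measurable_component_singleton]) auto
  finally show ?thesis .
qed

lemma prefix_event_sets: "{\<omega>. prefix_word \<omega> K \<in> A} \<in> sets (SeqSp :: (nat \<Rightarrow> 'g::finite) measure)"
  unfolding prefix_event_UN using finite_words_in cylinder_sets by blast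

lemma prefix_fun_measurable:
  "(\<lambda>\<omega>. F (prefix_word \<omega> K)) \<in> measurable (SeqSp :: (nat \<Rightarrow> 'g::finite) measure) (count_space UNIV)"
proof (rule measurableI)
  fix B
  have "(\<lambda>\<omega>. F (prefix_word \<omega> K)) -` B \<inter> space SeqSp = {\<omega>. prefix_word \<omega> K \<in> F -` B}"
    by auto
  then show "(\<lambda>\<omega>. F (prefix_word \<omega> K)) -` B \<inter> space SeqSp \<in> sets (SeqSp :: (nat \<Rightarrow> 'g) measure)"
    using prefix_event_sets by metis
qed auto

lemma shift_power_measurable: "shift ^^ k \<in> measurable SeqSp SeqSp"
proof -
  have "(\<lambda>\<omega> j. \<omega> (j + k)) \<in> measurable SeqSp SeqSp"
    by (rule measurable_PiM_single') (auto intro: measurable_component_singleton)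
  then show ?thesis
    by (simp add: shift_power[abs_def])
qed

lemma shift_measurable: "shift \<in> measurable SeqSp SeqSp"
  using shift_power_measurable[of 1] by simp

lemma measure_prefix_event:
  fixes M :: "(nat \<Rightarrow> 'g::finite) measure"
  assumes "sets M = sets SeqSp" "finite_measure M"
  shows "measure M {\<omega>. prefix_word \<omega> K \<in> A} = (\<Sum>w \<in> {w \<in> A. length w = K}. measure M (cylinder w))"
  unfolding prefix_event_UN
  by (rule finite_measure.finite_measure_finite_Union)
     (use assms finite_words_in disjoint_cylinders cylinder_sets in auto)

lemma measure_eq_on_cylinders:
  fixes M M' :: "(nat \<Rightarrow> 'g::finite) measure"
  assumes sets: "sets M = sets SeqSp" "sets M' = sets SeqSp"
    and fin: "finite_measure M" "finite_measure M'"
    and eq: "\<And>w. measure M (cylinder w) = measure M' (cylinder w)"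
  shows "M = M'"
proof (rule measure_eqI_PiM_infinite[OF sets _ fin(1)])
  fix J :: "nat set" and B :: "nat \<Rightarrow> 'g set"
  assume "finite J"
  then obtain K where K: "J \<subseteq> {..<K}"
    using finite_nat_bounded by blast
  define C where "C = {w. \<forall>i\<in>J. w ! i \<in> B i}"
  have "prod_emb UNIV (\<lambda>_. count_space UNIV) J (Pi\<^sub>E J B) = {\<omega>. prefix_word \<omega> K \<in> C}"
    using K by (force simp: prod_emb_def PiE_iff C_def)
  moreover have "measure M {\<omega>. prefix_word \<omega> K \<in> C} = measure M' {\<omega>. prefix_word \<omega> K \<in> C}"
    by (simp only: measure_prefix_event sets fin eq)
  ultimately show "emeasure M (prod_emb UNIV (\<lambda>_. count_space UNIV) J (Pi\<^sub>E J B))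
      = emeasure M' (prod_emb UNIV (\<lambda>_. count_space UNIV) J (Pi\<^sub>E J B))"
    by (simp add: finite_measure.emeasure_eq_measure[OF fin(1)]
        finite_measure.emeasure_eq_measure[OF fin(2)])
qed

section \<open>Bernoulli measures\<close>

definition word_prob :: "('g \<Rightarrow> real) \<Rightarrow> 'g list \<Rightarrow> real" where
  "word_prob p w = prod_list (map p w)"

lemma word_prob_Nil [simp]: "word_prob p [] = 1"
  and word_prob_Cons [simp]: "word_prob p (a # v) = p a * word_prob p v"
  and word_prob_append [simp]: "word_prob p (u @ v) = word_prob p u * word_prob p v"
  by (simp_all add: word_prob_def)

lemma word_prob_conv_prod: "word_prob p w = (\<Prod>j<length w. p (w ! j))"
  unfolding word_prob_def prod.list_conv_set_nth by (simp add: atLeast0LessThan)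

lemma word_prob_take: "t \<le> length w \<Longrightarrow> word_prob p (take t w) = (\<Prod>j<t. p (w ! j))"
  by (simp add: word_prob_conv_prod min_def)

lemma word_prob_replicate [simp]: "word_prob p (replicate n a) = p a ^ n"
  by (induction n) auto

lemma word_prob_lower_bound:
  assumes "\<And>g. c \<le> p g" "0 \<le> c"
  shows "c ^ length w \<le> word_prob p w"
proof (induction w)
  case (Cons a w)
  have "c * c ^ length w \<le> p a * word_prob p w"
    using Cons assms by (intro mult_mono) (auto intro: order_trans[of 0 c])
  then show ?case by simp
qed simp

locale bernoulli =
  fixes p :: "'g::finite \<Rightarrow> real" and P :: "(nat \<Rightarrow> 'g) measure"
  assumes p_pos: "\<And>g. 0 < p g" and p_sum: "(\<Sum>g\<in>UNIV. p g) = 1"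
    and P_sets: "sets P = sets SeqSp" and P_prob: "prob_space P"
    and P_bern: "\<And>gs. measure P (cylinder gs) = (\<Prod>j<length gs. p (gs ! j))"
begin

lemma space_P [simp]: "space P = UNIV"
  using sets_eq_imp_space_eq[OF P_sets] by simp

lemma measurable_P_iff: "measurable P M = measurable SeqSp M"
  by (rule measurable_cong_sets[OF P_sets refl])

lemma finite_measure_P: "finite_measure P"
  using P_prob by (simp add: prob_space_def)

lemma prefix_event_sets_P: "{\<omega>. prefix_word \<omega> K \<in> A} \<in> sets P"
  using prefix_event_sets P_sets by metis

lemma word_prob_pos: "0 < word_prob p w"
  by (induction w) (auto simp: p_pos)

lemma measure_cylinder: "measure P (cylinder w) = word_prob p w"
  by (simp add: P_bern word_prob_conv_prod)

lemma measure_prefix: "measure P {\<omega>. prefix_word \<omega> K \<in> A} = (\<Sum>w\<in>{w\<in>A. length w = K}. word_prob p w)"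
  by (simp add: measure_prefix_event[OF P_sets finite_measure_P] measure_cylinder)

lemma shift_measurable_P: "shift \<in> measurable P SeqSp"
  by (simp add: measurable_P_iff shift_measurable)

lemma shift_power_measurable_P: "shift ^^ k \<in> measurable P SeqSp"
  by (simp add: measurable_P_iff shift_power_measurable)

text \<open>Bernoulli measures are shift invariant: the preimage of \<open>[w]\<close> is the union of the \<open>[a w]\<close>.\<close>
lemma shift_invariant: "distr P SeqSp shift = P"
proof (rule measure_eq_on_cylinders)
  show "finite_measure (distr P SeqSp shift)"
    using prob_space.prob_space_distr[OF P_prob shift_measurable_P] by (simp add: prob_space_def)
  fix w :: "'g list"
  have prefix_Suc: "prefix_word \<omega> (Suc (length w)) = \<omega> 0 # prefix_word (shift \<omega>) (length w)" for \<omega>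
    by (simp add: list_eq_iff_nth_eq nth_Cons shift_def split: nat.split)
  have "shift -` cylinder w = {\<omega>. prefix_word \<omega> (Suc (length w)) \<in> range (\<lambda>a. a # w)}"
    unfolding cylinder_eq_prefix by (auto simp: prefix_Suc image_iff)
  moreover have "{u \<in> range (\<lambda>a. a # w). length u = Suc (length w)} = range (\<lambda>a. a # w)"
    by auto
  ultimately have "measure (distr P SeqSp shift) (cylinder w) = (\<Sum>u\<in>range (\<lambda>a. a # w). word_prob p u)"
    using measure_distr[OF shift_measurable_P cylinder_sets[of w]] by (simp add: measure_prefix)
  also have "\<dots> = (\<Sum>a\<in>UNIV. p a) * word_prob p w"
    by (subst sum.reindex) (auto simp: inj_on_def sum_distrib_right)
  finally show "measure (distr P SeqSp shift) (cylinder w) = measure P (cylinder w)"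
    by (simp add: p_sum measure_cylinder)
qed (simp_all add: P_sets finite_measure_P)

text \<open>On cylinders, independence of past and future is a direct computation: the event "the
  first \<open>k\<close> letters lie in \<open>A\<close> and the next ones spell \<open>v\<close>" consists of the words \<open>u @ v\<close>.\<close>
lemma prefix_shift_indep_cylinder:
  "measure P ({\<omega>. prefix_word \<omega> k \<in> A} \<inter> (shift ^^ k) -` cylinder v)
     = measure P {\<omega>. prefix_word \<omega> k \<in> A} * measure P (cylinder v)"
proof -
  have "{\<omega>. prefix_word \<omega> k \<in> A} \<inter> (shift ^^ k) -` cylinder v
      = {\<omega>. prefix_word \<omega> (k + length v) \<in> (\<lambda>u. u @ v) ` {u\<in>A. length u = k}}"
    unfolding cylinder_eq_prefix prefix_word_add by auto
  moreover have "{w \<in> (\<lambda>u. u @ v) ` {u\<in>A. length u = k}. length w = k + length v}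
      = (\<lambda>u. u @ v) ` {u\<in>A. length u = k}"
    by auto
  ultimately have "measure P ({\<omega>. prefix_word \<omega> k \<in> A} \<inter> (shift ^^ k) -` cylinder v)
      = (\<Sum>w\<in>(\<lambda>u. u @ v) ` {u\<in>A. length u = k}. word_prob p w)"
    by (simp only: measure_prefix)
  also have "\<dots> = (\<Sum>u\<in>{u\<in>A. length u = k}. word_prob p u * word_prob p v)"
    by (subst sum.reindex) (auto simp: inj_on_def)
  also have "\<dots> = measure P {\<omega>. prefix_word \<omega> k \<in> A} * measure P (cylinder v)"
    by (simp add: measure_prefix measure_cylinder sum_distrib_right)
  finally show ?thesis .
qed

text \<open>As measures in \<open>Y\<close>, both
  sides agree on cylinders, hence everywhere.\<close>
lemma prefix_shift_indep:
  assumes Y: "Y \<in> sets SeqSp"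
  shows "measure P ({\<omega>. prefix_word \<omega> k \<in> A} \<inter> (shift ^^ k) -` Y)
       = measure P {\<omega>. prefix_word \<omega> k \<in> A} * measure P Y"
proof -
  let ?X = "{\<omega>. prefix_word \<omega> k \<in> A}"
  define M1 where "M1 = distr (density P (indicator ?X)) SeqSp (shift ^^ k)"
  define M2 where "M2 = scale_measure (ennreal (measure P ?X)) P"
  have shift_density: "shift ^^ k \<in> measurable (density P (indicator ?X)) SeqSp"
    using shift_power_measurable_P measurable_cong_sets[OF sets_density refl] by metis
  have M1_eq: "emeasure M1 B = measure P (?X \<inter> (shift ^^ k) -` B)" if B: "B \<in> sets SeqSp" for B
  proof -
    have "emeasure M1 B = emeasure (density P (indicator ?X)) ((shift ^^ k) -` B)"
      unfolding M1_def using emeasure_distr[OF shift_density B] by simp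
    also have "\<dots> = emeasure P (?X \<inter> (shift ^^ k) -` B)"
      using measurable_sets[OF shift_power_measurable_P B]
      by (intro emeasure_restricted prefix_event_sets_P) simp
    also have "\<dots> = measure P (?X \<inter> (shift ^^ k) -` B)"
      by (rule finite_measure.emeasure_eq_measure[OF finite_measure_P])
    finally show ?thesis .
  qed
  have M2_eq: "emeasure M2 B = measure P ?X * measure P B" for B
    unfolding M2_def emeasure_scale_measure finite_measure.emeasure_eq_measure[OF finite_measure_P]
    by (simp add: ennreal_mult)
  have "M1 = M2"
  proof (rule measure_eq_on_cylinders)
    show sets_M1: "sets M1 = sets SeqSp" and "sets M2 = sets SeqSp"
      by (simp_all add: M1_def M2_def P_sets)
    have "UNIV \<in> sets (SeqSp :: (nat \<Rightarrow> 'g) measure)"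
      using sets.top[of "SeqSp :: (nat \<Rightarrow> 'g) measure"] by simp
    then have "emeasure M1 (space M1) \<noteq> \<infinity>"
      using M1_eq sets_eq_imp_space_eq[OF sets_M1] by simp
    then show "finite_measure M1"
      by (rule finite_measureI)
    show "finite_measure M2"
      by (rule finite_measureI) (simp add: M2_eq)
    show "measure M1 (cylinder v) = measure M2 (cylinder v)" for v
      using M1_eq[OF cylinder_sets] prefix_shift_indep_cylinder by (simp add: measure_def M2_eq)
  qed
  then have "ennreal (measure P (?X \<inter> (shift ^^ k) -` Y)) = ennreal (measure P ?X * measure P Y)"
    using M1_eq[OF Y] M2_eq[of Y] by simp
  then show ?thesis
    by (simp add: ennreal_inj)
qed

lemma prefix_shift_indep_gap:
  assumes Y: "Y \<in> sets SeqSp" and "K \<le> k"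
  shows "measure P ({\<omega>. prefix_word \<omega> K \<in> A} \<inter> (shift ^^ k) -` Y)
       = measure P {\<omega>. prefix_word \<omega> K \<in> A} * measure P Y"
proof -
  have "{\<omega>. prefix_word \<omega> K \<in> A} = {\<omega>. prefix_word \<omega> k \<in> {u. take K u \<in> A}}"
    by (simp add: prefix_word_take[OF assms(2)])
  then show ?thesis
    by (simp only: prefix_shift_indep[OF Y])
qed

lemma measure_prefix_truncate:
  assumes kK: "k \<le> K" and c: "0 < c" "\<And>g. c \<le> p g"
  shows "measure P {\<omega>. prefix_word \<omega> k \<in> take k ` {w\<in>A. length w = K}}
       \<le> (1/c) ^ (K - k) * measure P {\<omega>. prefix_word \<omega> K \<in> A}"
proof -
  let ?A = "{w\<in>A. length w = K}"
  let ?B = "take k ` ?A"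
  define ext where "ext u = (SOME w. w \<in> ?A \<and> take k w = u)" for u
  have ext: "ext u \<in> ?A \<and> take k (ext u) = u" if "u \<in> ?B" for u
    using that unfolding ext_def by (rule imageE) (rule someI, blast)
  have "(\<Sum>u\<in>?B. word_prob p u) \<le> (\<Sum>u\<in>?B. (1/c) ^ (K - k) * word_prob p (ext u))"
  proof (rule sum_mono)
    fix u assume u: "u \<in> ?B"
    have "word_prob p (ext u) = word_prob p u * word_prob p (drop k (ext u))"
      using ext[OF u] by (metis append_take_drop_id word_prob_append)
    moreover have "c ^ (K - k) \<le> word_prob p (drop k (ext u))"
      using word_prob_lower_bound[of c p "drop k (ext u)"] c ext[OF u] by simp
    ultimately have "word_prob p u * c ^ (K - k) \<le> word_prob p (ext u)"
      using word_prob_pos[of u] by simp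
    then show "word_prob p u \<le> (1/c) ^ (K - k) * word_prob p (ext u)"
      using c by (simp add: field_simps power_divide)
  qed
  also have "\<dots> = (1/c) ^ (K - k) * (\<Sum>w\<in>ext ` ?B. word_prob p w)"
  proof -
    have "inj_on ext ?B"
      by (rule inj_on_inverseI[where g = "take k"]) (use ext in blast)
    then show ?thesis
      by (simp add: sum_distrib_left sum.reindex)
  qed
  also have "\<dots> \<le> (1/c) ^ (K - k) * (\<Sum>w\<in>?A. word_prob p w)"
    using ext c by (intro mult_left_mono sum_mono2 finite_words_in)
      (auto simp: less_imp_le[OF word_prob_pos])
  finally have "(\<Sum>u\<in>?B. word_prob p u) \<le> (1/c) ^ (K - k) * (\<Sum>w\<in>?A. word_prob p w)" .
  moreover have "{u \<in> ?B. length u = k} = ?B"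
    using kK by auto
  ultimately show ?thesis
    by (simp add: measure_prefix)
qed

lemma prefix_shift_dependence_bound:
  assumes Y: "Y \<in> sets SeqSp" and kK: "k \<le> K" and c: "0 < c" "\<And>g. c \<le> p g"
  shows "measure P ({\<omega>. prefix_word \<omega> K \<in> A} \<inter> (shift ^^ k) -` Y)
     \<le> (1/c) ^ (K - k) * measure P {\<omega>. prefix_word \<omega> K \<in> A} * measure P Y"
proof -
  let ?B = "take k ` {w\<in>A. length w = K}"
  have "{\<omega>. prefix_word \<omega> K \<in> A} \<subseteq> {\<omega>. prefix_word \<omega> k \<in> ?B}"
  proof
    fix \<omega> assume "\<omega> \<in> {\<omega>. prefix_word \<omega> K \<in> A}"
    then have "take k (prefix_word \<omega> K) \<in> ?B"
      by auto
    then show "\<omega> \<in> {\<omega>. prefix_word \<omega> k \<in> ?B}"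
      by (simp add: prefix_word_take[OF kK])
  qed
  then have "measure P ({\<omega>. prefix_word \<omega> K \<in> A} \<inter> (shift ^^ k) -` Y)
      \<le> measure P ({\<omega>. prefix_word \<omega> k \<in> ?B} \<inter> (shift ^^ k) -` Y)"
    using measurable_sets[OF shift_power_measurable_P Y]
    by (intro finite_measure.finite_measure_mono[OF finite_measure_P]) (auto intro: prefix_event_sets_P)
  also have "\<dots> = measure P {\<omega>. prefix_word \<omega> k \<in> ?B} * measure P Y"
    by (rule prefix_shift_indep[OF Y])
  also have "\<dots> \<le> (1/c) ^ (K - k) * measure P {\<omega>. prefix_word \<omega> K \<in> A} * measure P Y"
    by (intro mult_right_mono measure_prefix_truncate[OF kK c]) simp
  finally show ?thesis .
qed

end

section \<open>The block-sum map \<open>\<Phi>\<close>\<close>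

definition window_sums :: "nat \<Rightarrow> nat \<Rightarrow> 'g::comm_monoid_add list \<Rightarrow> 'g list" where
  "window_sums N n w = map (\<lambda>j. \<Sum>i<N. w ! (j + i)) [0..<n]"

lemma prefix_block_sum:
  "prefix_word (block_sum N \<omega>) n = window_sums N n (prefix_word \<omega> (n + N - 1))"
  unfolding prefix_word_def window_sums_def block_sum_def by (auto intro!: sum.cong)

lemma block_sum_prefix_event:
  "block_sum N -` {\<omega>. prefix_word \<omega> n \<in> A} = {\<omega>. prefix_word \<omega> (n + N - 1) \<in> window_sums N n -` A}"
  by (simp add: prefix_block_sum)

lemma block_sum_shift_power: "block_sum N ((shift ^^ k) \<omega>) = (shift ^^ k) (block_sum N \<omega>)"
  by (auto simp: block_sum_def shift_power add_ac intro!: sum.cong)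

lemma block_sum_shift: "block_sum N (shift \<omega>) = shift (block_sum N \<omega>)"
  using block_sum_shift_power[of N 1 \<omega>] by simp

lemma block_sum_measurable:
  "block_sum N \<in> measurable SeqSp (SeqSp :: (nat \<Rightarrow> 'g::{finite,comm_monoid_add}) measure)"
proof (rule measurable_PiM_single')
  fix j :: nat
  show "(\<lambda>\<omega> :: nat \<Rightarrow> 'g. block_sum N \<omega> j) \<in> measurable SeqSp (count_space UNIV)"
    using prefix_fun_measurable[of "\<lambda>w. \<Sum>i<N. w ! (j + i)" "j + N"] by (simp add: block_sum_def)
qed auto

lemma coord_sigma_prefix_event:
  assumes "E \<in> coord_sigma n"
  obtains A where "E = {\<omega>. prefix_word \<omega> n \<in> A}"
proof -
  have "\<exists>A. E = {\<omega>. prefix_word \<omega> n \<in> A}"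
    using assms unfolding coord_sigma_def
  proof (induction rule: sigma_sets.induct)
    case (Basic a)
    then obtain i B where "a = {\<omega>. \<omega> i \<in> B}" "i < n"
      by auto
    then have "a = {\<omega>. prefix_word \<omega> n \<in> {w. w ! i \<in> B}}"
      by auto
    then show ?case by blast
  next
    case Empty
    have "{} = {\<omega>. prefix_word \<omega> n \<in> {}}"
      by simp
    then show ?case by blast
  next
    case (Compl a)
    then obtain A where "a = {\<omega>. prefix_word \<omega> n \<in> A}"
      by blast
    then have "UNIV - a = {\<omega>. prefix_word \<omega> n \<in> - A}"
      by auto
    then show ?case by blast
  next
    case (Union a)
    then obtain A where "\<And>i. a i = {\<omega>. prefix_word \<omega> n \<in> A i}"
      by metis
    then have "(\<Union>i. a i) = {\<omega>. prefix_word \<omega> n \<in> (\<Union>i. A i)}"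
      by auto
    then show ?case by blast
  qed
  then show ?thesis
    using that by blast
qed

lemma abs_diff_le_from_upper:
  fixes x y C :: real
  assumes "0 \<le> x" "x \<le> C * y" "0 \<le> y" "1 \<le> C"
  shows "\<bar>x - y\<bar> \<le> C * y"
proof -
  have "y \<le> C * y"
    using mult_right_mono[OF assms(4,3)] by simp
  then show ?thesis
    using assms(1-3) by (simp add: abs_le_iff)
qed

locale block_sum_process = bernoulli p P for p :: "'g::{finite,comm_monoid_add} \<Rightarrow> real" and P +
  fixes N :: nat
begin

abbreviation P0 :: "(nat \<Rightarrow> 'g) measure" where
  "P0 \<equiv> distr P SeqSp (block_sum N)"

lemma block_sum_measurable_P: "block_sum N \<in> measurable P SeqSp"
  by (simp add: measurable_P_iff block_sum_measurable)

lemma measure_P0: "S \<in> sets SeqSp \<Longrightarrow> measure P0 S = measure P (block_sum N -` S)"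
  using measure_distr[OF block_sum_measurable_P] by simp

text \<open>Part (a): \<open>P\<^sub>0\<close> is shift invariant, since \<open>P\<close> is and \<open>\<Phi> \<circ> T = T \<circ> \<Phi>\<close>.\<close>
lemma P0_shift_invariant: "distr P0 SeqSp shift = P0"
proof -
  have "distr P0 SeqSp shift = distr P SeqSp (shift \<circ> block_sum N)"
    by (rule distr_distr[OF shift_measurable block_sum_measurable_P])
  also have "shift \<circ> block_sum N = block_sum N \<circ> shift"
    by (auto simp: block_sum_shift)
  also have "distr P SeqSp (block_sum N \<circ> shift) = distr (distr P SeqSp shift) SeqSp (block_sum N)"
    by (rule distr_distr[OF block_sum_measurable shift_measurable_P, symmetric])
  finally show ?thesis
    by (simp add: shift_invariant)
qed

lemma p_le_1: "p g \<le> 1"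
  using member_le_sum[of g UNIV p] p_pos p_sum by (simp add: less_imp_le)

lemma P0_pullback:
  assumes F: "F \<in> sets SeqSp"
  shows "measure P0 ({\<omega>. prefix_word \<omega> n \<in> A} \<inter> (shift ^^ k) -` F)
       = measure P ({\<omega>. prefix_word \<omega> (n + N - 1) \<in> window_sums N n -` A} \<inter> (shift ^^ k) -` (block_sum N -` F))"
    and "measure P0 {\<omega>. prefix_word \<omega> n \<in> A} = measure P {\<omega>. prefix_word \<omega> (n + N - 1) \<in> window_sums N n -` A}"
proof -
  have "block_sum N -` ({\<omega>. prefix_word \<omega> n \<in> A} \<inter> (shift ^^ k) -` F)
      = {\<omega>. prefix_word \<omega> (n + N - 1) \<in> window_sums N n -` A} \<inter> (shift ^^ k) -` (block_sum N -` F)"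
    unfolding block_sum_prefix_event[symmetric] by (auto simp: block_sum_shift_power)
  moreover have "{\<omega>. prefix_word \<omega> n \<in> A} \<inter> (shift ^^ k) -` F \<in> sets SeqSp"
    using measurable_sets[OF shift_power_measurable F] by (intro sets.Int prefix_event_sets) simp
  ultimately show "measure P0 ({\<omega>. prefix_word \<omega> n \<in> A} \<inter> (shift ^^ k) -` F)
       = measure P ({\<omega>. prefix_word \<omega> (n + N - 1) \<in> window_sums N n -` A} \<inter> (shift ^^ k) -` (block_sum N -` F))"
    by (simp add: measure_P0)
  show "measure P0 {\<omega>. prefix_word \<omega> n \<in> A} = measure P {\<omega>. prefix_word \<omega> (n + N - 1) \<in> window_sums N n -` A}"
    using measure_P0[OF prefix_event_sets] by (simp add: prefix_block_sum)
qed

text \<open>The pulled-back past event is exactly independent of the future after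
  a gap \<open>m \<ge> N - 1\<close>, and dependent at most up to the factor \<open>c^-(N-1)\<close> for shorter gaps.\<close>
lemma P0_mixing_estimate:
  assumes E: "E \<in> coord_sigma n" and F: "F \<in> sets SeqSp"
    and c: "0 < c" "\<And>g. c \<le> p g"
  shows "\<bar>measure P0 (E \<inter> (shift ^^ (n + m)) -` F) - measure P0 E * measure P0 F\<bar>
       \<le> (if m < N - 1 then (1/c) ^ (N - 1) else 0) * measure P0 E * measure P0 F"
proof -
  obtain A where A: "E = {\<omega>. prefix_word \<omega> n \<in> A}"
    using coord_sigma_prefix_event[OF E] .
  let ?X = "{\<omega>. prefix_word \<omega> (n + N - 1) \<in> window_sums N n -` A}"
  let ?Y = "block_sum N -` F"
  have Y: "?Y \<in> sets SeqSp"
    using measurable_sets[OF block_sum_measurable F] by simp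
  have pullback: "measure P0 (E \<inter> (shift ^^ (n + m)) -` F) = measure P (?X \<inter> (shift ^^ (n + m)) -` ?Y)"
    "measure P0 E = measure P ?X" "measure P0 F = measure P ?Y"
    unfolding A using P0_pullback[OF F] measure_P0[OF F] by simp_all
  show ?thesis
  proof (cases "m < N - 1")
    case False
    then show ?thesis
      using prefix_shift_indep_gap[OF Y, of "n + N - 1" "n + m" "window_sums N n -` A"]
      by (simp add: pullback)
  next
    case True
    define C where "C = (1/c) ^ (N - 1)"
    have "1 \<le> 1/c"
      using c(1) order_trans[OF c(2) p_le_1] by (simp add: field_simps)
    then have C: "1 \<le> C" "(1/c) ^ (n + N - 1 - (n + m)) \<le> C"
      unfolding C_def by (auto intro: one_le_power power_increasing)
    have "measure P (?X \<inter> (shift ^^ (n + m)) -` ?Y)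
        \<le> (1/c) ^ (n + N - 1 - (n + m)) * (measure P ?X * measure P ?Y)"
      using prefix_shift_dependence_bound[OF Y _ c, of "n + m" "n + N - 1" "window_sums N n -` A"] True
      by (simp add: mult.assoc)
    also have "\<dots> \<le> C * (measure P ?X * measure P ?Y)"
      using C by (intro mult_right_mono) simp_all
    finally have "\<bar>measure P (?X \<inter> (shift ^^ (n + m)) -` ?Y) - measure P ?X * measure P ?Y\<bar>
        \<le> C * (measure P ?X * measure P ?Y)"
      by (intro abs_diff_le_from_upper C) simp_all
    then show ?thesis
      using True by (simp add: pullback C_def mult.assoc)
  qed
qed

lemma P0_psi_mixing: "psi_mixing P0"
proof -
  define c where "c = Min (range p)"
  have c: "0 < c" "\<And>g. c \<le> p g"
    unfolding c_def using p_pos by (auto simp: Min_gr_iff)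
  define \<psi> where "\<psi> m = (if m < N - 1 then (1/c) ^ (N - 1) else 0)" for m
  show ?thesis
    unfolding psi_mixing_def
  proof (intro exI[of _ \<psi>] conjI allI impI)
    show "0 \<le> \<psi> m" for m
      using c by (simp add: \<psi>_def)
    show "\<psi> \<longlonglongrightarrow> 0"
      by (rule tendsto_eventually) (auto simp: \<psi>_def eventually_sequentially intro: exI[of _ "N - 1"])
    fix m n and E F :: "(nat \<Rightarrow> 'g) set"
    assume "E \<in> coord_sigma n \<and> F \<in> sets SeqSp"
    then show "\<bar>measure P0 (E \<inter> (shift ^^ (n + m)) -` F) - measure P0 E * measure P0 F\<bar>
        \<le> \<psi> m * measure P0 E * measure P0 F"
      unfolding \<psi>_def by (intro P0_mixing_estimate c) auto
  qed
qed

end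

section \<open>Periodic words and constant block sums\<close>

definition periodic_word :: "'a list \<Rightarrow> nat \<Rightarrow> 'a list" where
  "periodic_word x L = map (\<lambda>j. x ! (j mod length x)) [0..<L]"

lemma length_periodic_word [simp]: "length (periodic_word x L) = L"
  by (simp add: periodic_word_def)

lemma nth_periodic_word: "j < L \<Longrightarrow> periodic_word x L ! j = x ! (j mod length x)"
  by (simp add: periodic_word_def)

lemma periodic_word_short: "t \<le> length x \<Longrightarrow> periodic_word x t = take t x"
  by (auto simp: list_eq_iff_nth_eq nth_periodic_word)

lemma take_periodic_word: "k \<le> L \<Longrightarrow> take k (periodic_word x L) = periodic_word x k"
  by (simp add: periodic_word_def take_map)

lemma periodic_word_add:
  assumes "0 < length x"
  shows "periodic_word x (length x + L) = x @ periodic_word x L"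
proof (rule nth_equalityI)
  fix j assume j: "j < length (periodic_word x (length x + L))"
  show "periodic_word x (length x + L) ! j = (x @ periodic_word x L) ! j"
  proof (cases "j < length x")
    case True
    then show ?thesis
      using j by (simp add: nth_periodic_word nth_append)
  next
    case False
    then have "j mod length x = (j - length x) mod length x"
      by (simp add: le_mod_geq)
    then show ?thesis
      using j False by (simp add: nth_periodic_word nth_append)
  qed
qed simp

lemma word_prob_periodic:
  assumes "0 < length x" "t \<le> length x"
  shows "word_prob p (periodic_word x (q * length x + t)) = word_prob p x ^ q * word_prob p (take t x)"
proof (induction q)
  case (Suc q)
  have "periodic_word x (Suc q * length x + t) = x @ periodic_word x (q * length x + t)"
    using periodic_word_add[OF assms(1), of "q * length x + t"] by (simp add: add.assoc)
  then show ?case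
    using Suc by simp
qed (simp add: periodic_word_short assms)

lemma window_step:
  "(\<Sum>i<N. f (Suc j + i)) + f j = (\<Sum>i<N. f (j + i)) + (f (j + N) :: 'a::comm_monoid_add)"
proof -
  have "(\<Sum>i<Suc N. f (j + i)) = f j + (\<Sum>i<N. f (Suc j + i))"
    by (subst sum.lessThan_Suc_shift) simp
  then show ?thesis
    by (simp add: add.commute)
qed

lemma window_sum_periodic:
  fixes f :: "nat \<Rightarrow> 'a::cancel_comm_monoid_add"
  assumes "\<And>j. f (j + N) = f j"
  shows "(\<Sum>i<N. f (j + i)) = (\<Sum>i<N. f i)"
proof (induction j)
  case (Suc j)
  have "(\<Sum>i<N. f (Suc j + i)) + f j = (\<Sum>i<N. f (j + i)) + f j"
    using window_step[where N = N and f = f and j = j] assms[of j] by simp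
  then show ?case
    using Suc by simp
qed simp

lemma window_sum_eq_imp_periodic:
  fixes f :: "nat \<Rightarrow> 'a::cancel_comm_monoid_add"
  assumes "(\<Sum>i<N. f (Suc j + i)) = (\<Sum>i<N. f (j + i))"
  shows "f (j + N) = f j"
  using window_step[where N = N and f = f and j = j] assms by simp

lemma window_sums_nth: "j < n \<Longrightarrow> window_sums N n w ! j = (\<Sum>i<N. w ! (j + i))"
  by (simp add: window_sums_def)

lemma window_sums_periodic_word:
  fixes x :: "'a::cancel_comm_monoid_add list"
  assumes x: "length x = N" "0 < N"
  shows "window_sums N n (periodic_word x (n + N - 1)) = replicate n (sum_list x)"
proof (rule nth_equalityI)
  fix j assume "j < length (window_sums N n (periodic_word x (n + N - 1)))"
  then have j: "j < n"
    by (simp add: window_sums_def)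
  have "(\<Sum>i<N. periodic_word x (n + N - 1) ! (j + i)) = (\<Sum>i<N. x ! ((j + i) mod N))"
    using j x by (intro sum.cong) (auto simp: nth_periodic_word)
  also have "\<dots> = (\<Sum>i<N. x ! (i mod N))"
    by (rule window_sum_periodic[where f = "\<lambda>i. x ! (i mod N)"]) simp
  also have "\<dots> = sum_list x"
    using x by (simp add: sum_list_sum_nth atLeast0LessThan)
  finally show "window_sums N n (periodic_word x (n + N - 1)) ! j = replicate n (sum_list x) ! j"
    using j by (simp add: window_sums_nth)
qed (simp add: window_sums_def)

lemma constant_window_sums_periodic:
  fixes w :: "'a::cancel_comm_monoid_add list"
  assumes w: "length w = n + N - 1" "window_sums N n w = replicate n s" and "0 < N" "1 \<le> n"
  shows "w = periodic_word (take N w) (n + N - 1)"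
proof -
  have window: "(\<Sum>i<N. w ! (j + i)) = s" if "j < n" for j
    using w(2) window_sums_nth[OF that, of N w] that by simp
  have periodic: "w ! j = w ! (j mod N)" if "j < length w" for j
    using that
  proof (induction j rule: less_induct)
    case (less j)
    show ?case
    proof (cases "j < N")
      case False
      then have "Suc (j - N) < n"
        using less.prems w(1) by linarith
      then have "(\<Sum>i<N. w ! (Suc (j - N) + i)) = (\<Sum>i<N. w ! (j - N + i))"
        using window[of "Suc (j - N)"] window[of "j - N"] by simp
      then have "w ! (j - N + N) = w ! (j - N)"
        by (rule window_sum_eq_imp_periodic)
      then have "w ! j = w ! (j - N)"
        using False by simp
      also have "\<dots> = w ! (j mod N)"
        using less False \<open>0 < N\<close> by (simp add: le_mod_geq)
      finally show ?thesis .
    qed simp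
  qed
  have "length (take N w) = N"
    using w(1) assms(4) by simp
  then show ?thesis
    using w(1) periodic \<open>0 < N\<close> by (intro nth_equalityI) (simp_all add: nth_periodic_word)
qed

lemma constant_window_sums_words:
  fixes s :: "'a::cancel_comm_monoid_add"
  assumes "0 < N" "1 \<le> n"
  shows "bij_betw (\<lambda>x. periodic_word x (n + N - 1)) {x. length x = N \<and> sum_list x = s}
           {w \<in> window_sums N n -` {replicate n s}. length w = n + N - 1}"
proof (rule bij_betw_byWitness[where f' = "take N"])
  show "\<forall>x\<in>{x. length x = N \<and> sum_list x = s}. take N (periodic_word x (n + N - 1)) = x"
    using assms by (simp add: take_periodic_word periodic_word_short)
  show "\<forall>w\<in>{w \<in> window_sums N n -` {replicate n s}. length w = n + N - 1}.
          periodic_word (take N w) (n + N - 1) = w"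
    using constant_window_sums_periodic[OF _ _ assms, THEN sym] by auto
  show "(\<lambda>x. periodic_word x (n + N - 1)) ` {x. length x = N \<and> sum_list x = s}
          \<subseteq> {w \<in> window_sums N n -` {replicate n s}. length w = n + N - 1}"
    using window_sums_periodic_word[OF _ assms(1)] by auto
  have "sum_list (take N w) = s" if "length w = n + N - 1" "window_sums N n w = replicate n s" for w
  proof -
    have "sum_list (take N w) = (\<Sum>i<N. w ! (0 + i))"
      using that assms by (simp add: sum_list_sum_nth atLeast0LessThan)
    also have "\<dots> = s"
      using that assms window_sums_nth[of 0 n N w] by simp
    finally show ?thesis .
  qed
  then show "take N ` {w \<in> window_sums N n -` {replicate n s}. length w = n + N - 1}
          \<subseteq> {x. length x = N \<and> sum_list x = s}"
    using assms by auto
qed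

section \<open>Words of maximal weight with a prescribed sum\<close>

lemma sum_list_update_group:
  "k < length xs \<Longrightarrow> sum_list (xs[k := y]) = sum_list xs + y - (xs ! k :: 'a::ab_group_add)"
  by (induction xs arbitrary: k) (auto simp: algebra_simps split: nat.split)

lemma word_prob_update:
  "k < length xs \<Longrightarrow> word_prob p (xs[k := y]) * p (xs ! k) = word_prob p xs * p y"
  by (induction xs arbitrary: k) (auto simp: algebra_simps split: nat.split)

definition defect_word :: "nat \<Rightarrow> 'a \<Rightarrow> 'a \<Rightarrow> nat \<Rightarrow> 'a list" where
  "defect_word N h g k = (replicate N h)[k := g]"

lemma length_defect_word [simp]: "length (defect_word N h g k) = N"
  by (simp add: defect_word_def)

lemma nth_defect_word: "j < N \<Longrightarrow> defect_word N h g k ! j = (if j = k then g else h)"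
  by (simp add: defect_word_def nth_list_update)

lemma sum_defect_word:
  "k < N \<Longrightarrow> sum_list (defect_word N h g k) = sum_list (replicate N h) + g - (h :: 'a::ab_group_add)"
  by (simp add: defect_word_def sum_list_update_group)

lemma word_prob_defect_word:
  assumes "k < N" "0 < p h"
  shows "word_prob p (defect_word N h g k) = p h ^ (N - 1) * p g"
proof -
  have "word_prob p (defect_word N h g k) * p h = p h ^ N * p g"
    using word_prob_update[of k "replicate N h" p g] assms by (simp add: defect_word_def)
  moreover have "p h ^ N = p h ^ (N - 1) * p h"
    using assms by (cases N) auto
  ultimately show ?thesis
    using assms by (simp add: field_simps)
qed

lemma second_heaviest:
  fixes p :: "'a::finite \<Rightarrow> real"
  assumes "UNIV \<noteq> {h}"
  obtains g where "g \<noteq> h" "\<And>y. y \<noteq> h \<Longrightarrow> p y \<le> p g"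
proof -
  have "UNIV - {h} \<noteq> {}"
    using assms by auto
  then have "Max (p ` (UNIV - {h})) \<in> p ` (UNIV - {h})"
    by (intro Max_in) auto
  then obtain g where g: "g \<in> UNIV - {h}" "Max (p ` (UNIV - {h})) = p g"
    by (rule imageE)
  show ?thesis
  proof (rule that)
    show "g \<noteq> h"
      using g(1) by simp
    show "p y \<le> p g" if "y \<noteq> h" for y
      using that g(2)[symmetric] by simp
  qed
qed

context
  fixes p :: "'a::ab_group_add \<Rightarrow> real" and h g :: 'a
  assumes pos: "\<And>y. 0 < p y" and g_ne_h: "g \<noteq> h" and g_lt_h: "p g < p h"
    and g_second: "\<And>y. y \<noteq> h \<Longrightarrow> p y \<le> p g"
begin

lemma le_heaviest: "p y \<le> p h"
  using g_second[of y] g_lt_h by (cases "y = h") auto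

lemma word_prob_two_defects:
  assumes x: "length x = N" and j: "j1 < N" "j2 < N" "j1 \<noteq> j2" "x ! j1 \<noteq> h" "x ! j2 \<noteq> h"
  shows "word_prob p x < p h ^ (N - 1) * p g"
proof -
  let ?R = "{..<N} - {j1, j2}"
  have "word_prob p x = (\<Prod>j\<in>{j1, j2}. p (x ! j)) * (\<Prod>j\<in>?R. p (x ! j))"
    using x j by (simp add: word_prob_conv_prod prod.subset_diff[of "{j1, j2}" "{..<N}"])
  also have "\<dots> = p (x ! j1) * p (x ! j2) * (\<Prod>j\<in>?R. p (x ! j))"
    using j by simp
  also have "\<dots> \<le> p g * p g * p h ^ (N - 2)"
  proof (intro mult_mono)
    show "(\<Prod>j\<in>?R. p (x ! j)) \<le> p h ^ (N - 2)"
      using prod_mono[of ?R "\<lambda>j. p (x ! j)" "\<lambda>_. p h"] pos le_heaviest j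
      by (simp add: less_imp_le card_Diff_subset numeral_2_eq_2)
  qed (use g_second j pos in \<open>auto simp: less_imp_le prod_nonneg\<close>)
  also have "\<dots> < p g * p h * p h ^ (N - 2)"
    using pos[of g] pos[of h] g_lt_h by simp
  also have "\<dots> = p h ^ (N - 1) * p g"
  proof -
    have "N - 1 = Suc (N - 2)"
      using j by linarith
    then show ?thesis
      by (simp add: mult_ac)
  qed
  finally show ?thesis .
qed

lemma maximal_weight_words:
  assumes x: "length x = N" "sum_list x = sum_list (defect_word N h g 0)" and N: "0 < N"
  shows "word_prob p x \<le> p h ^ (N - 1) * p g
    \<and> (word_prob p x = p h ^ (N - 1) * p g \<longrightarrow> x \<in> defect_word N h g ` {..<N})"
proof (cases "\<exists>j1 j2. j1 < N \<and> j2 < N \<and> j1 \<noteq> j2 \<and> x ! j1 \<noteq> h \<and> x ! j2 \<noteq> h")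
  case True
  then obtain j1 j2 where "j1 < N" "j2 < N" "j1 \<noteq> j2" "x ! j1 \<noteq> h" "x ! j2 \<noteq> h"
    by blast
  then have "word_prob p x < p h ^ (N - 1) * p g"
    by (rule word_prob_two_defects[OF x(1)])
  then show ?thesis
    by simp
next
  case at_most_one: False
  show ?thesis
  proof (cases "\<exists>k<N. x ! k \<noteq> h")
    case True
    then obtain k where k: "k < N" "x ! k \<noteq> h"
      by blast
    have x_eq: "x = defect_word N h (x ! k) k"
      using at_most_one k x(1) by (auto simp: list_eq_iff_nth_eq nth_defect_word)
    then have "x ! k = g"
      using x(2) sum_defect_word[OF k(1), of h "x ! k"] sum_defect_word[OF N, of h g] by simp
    then have "x = defect_word N h g k"
      using x_eq by simp
    then show ?thesis
      using word_prob_defect_word[of k N p h g] pos k(1) by auto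
  next
    case False
    then have "x = replicate N h"
      using x(1) by (auto simp: list_eq_iff_nth_eq)
    then show ?thesis
      using x(2) sum_defect_word[OF N, of h g] g_ne_h by simp
  qed
qed

end

lemma inj_on_defect_word:
  assumes "g \<noteq> h"
  shows "inj_on (defect_word N h g) {..<N}"
proof (rule inj_onI)
  fix k1 k2 assume k: "k1 \<in> {..<N}" "k2 \<in> {..<N}" "defect_word N h g k1 = defect_word N h g k2"
  then have "g = (if k1 = k2 then g else h)"
    using nth_defect_word[of k1 N h g k1] nth_defect_word[of k1 N h g k2] by simp
  then show "k1 = k2"
    using assms by (auto split: if_splits)
qed

lemma defect_prefix_weights:
  assumes "2 \<le> N"
  shows "(\<Sum>k<N. word_prob p (take 0 (defect_word N h g k))) = real N"
    and "(\<Sum>k<N. word_prob p (take 1 (defect_word N h g k))) = p g + (real N - 1) * p h"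
    and "(\<Sum>k<N. word_prob p (take 2 (defect_word N h g k))) = 2 * p g * p h + (real N - 2) * p h ^ 2"
proof -
  obtain M where M: "N = Suc (Suc M)"
    using assms by (metis add_2_eq_Suc le_iff_add)
  show "(\<Sum>k<N. word_prob p (take 0 (defect_word N h g k))) = real N"
    by simp
  have "(\<Sum>k<N. word_prob p (take 1 (defect_word N h g k))) = (\<Sum>k<Suc (Suc M). p (if 0 = k then g else h))"
    using M by (intro sum.cong) (simp_all add: word_prob_take nth_defect_word)
  also have "\<dots> = p g + (real N - 1) * p h"
    using M by (simp add: sum.lessThan_Suc_shift del: sum.lessThan_Suc)
  finally show "(\<Sum>k<N. word_prob p (take 1 (defect_word N h g k))) = p g + (real N - 1) * p h" .
  have "(\<Sum>k<N. word_prob p (take 2 (defect_word N h g k)))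
      = (\<Sum>k<Suc (Suc M). p (if 0 = k then g else h) * p (if 1 = k then g else h))"
    using M by (intro sum.cong) (simp_all add: word_prob_take nth_defect_word numeral_2_eq_2)
  also have "\<dots> = 2 * p g * p h + (real N - 2) * p h ^ 2"
    using M by (simp add: sum.lessThan_Suc_shift power2_eq_square algebra_simps del: sum.lessThan_Suc)
  finally show "(\<Sum>k<N. word_prob p (take 2 (defect_word N h g k))) = 2 * p g * p h + (real N - 2) * p h ^ 2" .
qed

text \<open>With \<open>a \<noteq> b\<close> the three weights above are not in geometric progression:
  \<open>c\<^sub>1\<^sup>2 - c\<^sub>0 c\<^sub>2 = (a - b)\<^sup>2\<close>.\<close>
lemma defect_weights_not_geometric:
  fixes a b n :: real
  assumes "a \<noteq> b"
  shows "(a + (n - 1) * b) ^ 2 \<noteq> n * (2 * a * b + (n - 2) * b ^ 2)"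
proof
  assume "(a + (n - 1) * b) ^ 2 = n * (2 * a * b + (n - 2) * b ^ 2)"
  then have "(a - b) ^ 2 = 0"
    by (simp add: power2_eq_square algebra_simps)
  with assms show False
    by simp
qed

lemma tendsto_dominant_terms:
  fixes w f :: "'a \<Rightarrow> real"
  assumes X: "finite X" "D \<subseteq> X" and W: "0 < W"
    and max: "\<And>x. x \<in> D \<Longrightarrow> w x = W" and less: "\<And>x. x \<in> X - D \<Longrightarrow> 0 \<le> w x \<and> w x < W"
  shows "(\<lambda>q. \<Sum>x\<in>X. (w x / W) ^ q * f x) \<longlonglongrightarrow> (\<Sum>x\<in>D. f x)"
proof -
  have "(\<lambda>q. \<Sum>x\<in>X. (w x / W) ^ q * f x) \<longlonglongrightarrow> (\<Sum>x\<in>X. if x \<in> D then f x else 0)"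
  proof (rule tendsto_sum)
    fix x assume "x \<in> X"
    show "(\<lambda>q. (w x / W) ^ q * f x) \<longlonglongrightarrow> (if x \<in> D then f x else 0)"
    proof (cases "x \<in> D")
      case False
      then have "norm (w x / W) < 1"
        using less[of x] \<open>x \<in> X\<close> W by simp
      then have "(\<lambda>q. (w x / W) ^ q) \<longlonglongrightarrow> 0"
        by (rule LIMSEQ_power_zero)
      then show ?thesis
        using False by (simp add: tendsto_mult_left_zero)
    qed (use max W in simp)
  qed
  also have "(\<Sum>x\<in>X. if x \<in> D then f x else 0) = (\<Sum>x\<in>D. f x)"
    using X by (simp add: sum.inter_restrict[symmetric] Int_absorb1)
  finally show ?thesis .
qed

lemma not_convergent_two_limits:
  fixes r :: "nat \<Rightarrow> 'a::t2_space"
  assumes "strict_mono \<sigma>" "strict_mono \<tau>" "(r \<circ> \<sigma>) \<longlonglongrightarrow> a" "(r \<circ> \<tau>) \<longlonglongrightarrow> b" "a \<noteq> b"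
  shows "\<not> convergent r"
proof
  assume "convergent r"
  then obtain l where l: "r \<longlonglongrightarrow> l"
    by (auto simp: convergent_def)
  have "a = l" "b = l"
    using LIMSEQ_unique[OF assms(3) LIMSEQ_subseq_LIMSEQ[OF l assms(1)]]
      LIMSEQ_unique[OF assms(4) LIMSEQ_subseq_LIMSEQ[OF l assms(2)]] by simp_all
  with \<open>a \<noteq> b\<close> show False
    by simp
qed

section \<open>Part (c): the constant sequences\<close>

locale block_sum_group = block_sum_process p P N
  for p :: "'g::{finite,ab_group_add} \<Rightarrow> real" and P N +
  assumes N_ge: "2 \<le> N"
begin

text \<open>By the correspondence between constant block sums and periodic words, the \<open>P\<^sub>0\<close>-mass of
  the constant cylinder \<open>[s,\<dots>,s]\<close> of length \<open>n \<ge> 1\<close> is a sum over the words of length \<open>N\<close>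
  with sum \<open>s\<close>.\<close>
lemma measure_P0_constant_cylinder:
  assumes "1 \<le> n"
  shows "measure P0 (cyl_of (\<lambda>_. s) n)
       = (\<Sum>x\<in>{x. length x = N \<and> sum_list x = s}. word_prob p (periodic_word x (n + N - 1)))"
proof -
  have cyl: "cyl_of (\<lambda>_. s) n = {\<omega>. prefix_word \<omega> n \<in> {replicate n s}}"
    by (auto simp: cyl_of_def list_eq_iff_nth_eq)
  have "measure P0 (cyl_of (\<lambda>_. s) n)
      = (\<Sum>w\<in>{w \<in> window_sums N n -` {replicate n s}. length w = n + N - 1}. word_prob p w)"
    unfolding cyl measure_P0[OF prefix_event_sets] block_sum_prefix_event measure_prefix ..
  also have "\<dots> = (\<Sum>x\<in>{x. length x = N \<and> sum_list x = s}. word_prob p (periodic_word x (n + N - 1)))"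
    using N_ge assms by (intro sum.reindex_bij_betw[symmetric] constant_window_sums_words) auto
  finally show ?thesis .
qed

lemma measure_P0_constant_cylinder_powers:
  assumes t: "t \<le> N"
  shows "measure P0 (cyl_of (\<lambda>_. s) (q * N + Suc t))
       = (\<Sum>x\<in>{x. length x = N \<and> sum_list x = s}. word_prob p x ^ Suc q * word_prob p (take t x))"
proof -
  have len: "q * N + Suc t + N - 1 = Suc q * N + t"
    by simp
  have "measure P0 (cyl_of (\<lambda>_. s) (q * N + Suc t))
      = (\<Sum>x\<in>{x. length x = N \<and> sum_list x = s}. word_prob p (periodic_word x (Suc q * N + t)))"
    using measure_P0_constant_cylinder[of "q * N + Suc t", unfolded len] by simp
  also have "\<dots> = (\<Sum>x\<in>{x. length x = N \<and> sum_list x = s}. word_prob p x ^ Suc q * word_prob p (take t x))"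
  proof (rule sum.cong)
    fix x assume "x \<in> {x. length x = N \<and> sum_list x = s}"
    then show "word_prob p (periodic_word x (Suc q * N + t)) = word_prob p x ^ Suc q * word_prob p (take t x)"
      using word_prob_periodic[of x t p "Suc q"] N_ge t by auto
  qed simp
  finally show ?thesis .
qed

context
  fixes h g :: 'g
  assumes h_max: "\<And>y. y \<noteq> h \<Longrightarrow> p y < p h"
    and g_ne_h: "g \<noteq> h" and g_second: "\<And>y. y \<noteq> h \<Longrightarrow> p y \<le> p g"
begin

lemma constant_cylinder_asymptotics:
  assumes t: "t \<le> N"
  shows "(\<lambda>q. measure P0 (cyl_of (\<lambda>_. sum_list (defect_word N h g 0)) (q * N + Suc t))
                / (p h ^ (N - 1) * p g) ^ Suc q)
         \<longlonglongrightarrow> (\<Sum>k<N. word_prob p (take t (defect_word N h g k)))"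
proof -
  define W where "W = p h ^ (N - 1) * p g"
  define X where "X = {x. length x = N \<and> sum_list x = sum_list (defect_word N h g 0)}"
  define D where "D = defect_word N h g ` {..<N}"
  have N: "0 < N"
    using N_ge by simp
  have W: "0 < W"
    by (simp add: W_def p_pos)
  have finite_X: "finite X"
    unfolding X_def by (rule finite_subset[OF _ finite_words_length[of N]]) auto
  have D_X: "D \<subseteq> X"
    using N by (auto simp: D_def X_def sum_defect_word)
  have max: "word_prob p x = W" if "x \<in> D" for x
    using that by (auto simp: D_def W_def word_prob_defect_word p_pos)
  have less: "0 \<le> word_prob p x \<and> word_prob p x < W" if "x \<in> X - D" for x
    using that maximal_weight_words[OF p_pos g_ne_h h_max[OF g_ne_h] g_second, of x N] N
      less_imp_le[OF word_prob_pos] by (auto simp: X_def D_def W_def)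
  have eq: "measure P0 (cyl_of (\<lambda>_. sum_list (defect_word N h g 0)) (q * N + Suc t)) / W ^ Suc q
      = (\<Sum>x\<in>X. (word_prob p x / W) ^ Suc q * word_prob p (take t x))" for q
    unfolding measure_P0_constant_cylinder_powers[OF t] X_def by (simp add: sum_divide_distrib power_divide)
  have sum_D: "(\<Sum>x\<in>D. word_prob p (take t x)) = (\<Sum>k<N. word_prob p (take t (defect_word N h g k)))"
    unfolding D_def using inj_on_defect_word[OF g_ne_h] by (simp add: sum.reindex)
  have "(\<lambda>q. \<Sum>x\<in>X. (word_prob p x / W) ^ q * word_prob p (take t x))
      \<longlonglongrightarrow> (\<Sum>k<N. word_prob p (take t (defect_word N h g k)))"
    unfolding sum_D[symmetric] using finite_X D_X W max less by (rule tendsto_dominant_terms)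
  then have "(\<lambda>q. \<Sum>x\<in>X. (word_prob p x / W) ^ Suc q * word_prob p (take t x))
      \<longlonglongrightarrow> (\<Sum>k<N. word_prob p (take t (defect_word N h g k)))"
    by (rule LIMSEQ_Suc)
  then show ?thesis
    unfolding W_def[symmetric] eq .
qed

text \<open>Consequently the conditional probabilities \<open>P\<^sub>0(A_(n+1) | A_n)\<close> of the constant sequence
  \<open>s = (N-1)h + g\<close> approach \<open>c\<^sub>1/c\<^sub>0\<close> along \<open>n \<equiv> 1\<close> and \<open>c\<^sub>2/c\<^sub>1\<close> along \<open>n \<equiv> 2 (mod N)\<close>, and
  these two limits differ.\<close>
lemma constant_sequence_ratio_not_convergent:
  defines "s \<equiv> sum_list (defect_word N h g 0)"
  shows "\<not> convergent (\<lambda>n. measure P0 (cyl_of (\<lambda>_. s) (Suc n)) / measure P0 (cyl_of (\<lambda>_. s) n))"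
proof -
  define r where "r n = measure P0 (cyl_of (\<lambda>_. s) (Suc n)) / measure P0 (cyl_of (\<lambda>_. s) n)" for n
  define c where "c t = (\<Sum>k<N. word_prob p (take t (defect_word N h g k)))" for t
  define W where "W = p h ^ (N - 1) * p g"
  have W: "0 < W"
    by (simp add: W_def p_pos)
  have ratio: "(r \<circ> (\<lambda>q. q * N + Suc t)) \<longlonglongrightarrow> c (Suc t) / c t" if "Suc t \<le> N" "c t \<noteq> 0" for t
  proof -
    have "(\<lambda>q. (measure P0 (cyl_of (\<lambda>_. s) (q * N + Suc (Suc t))) / W ^ Suc q)
              / (measure P0 (cyl_of (\<lambda>_. s) (q * N + Suc t)) / W ^ Suc q))
          \<longlonglongrightarrow> c (Suc t) / c t"
      using constant_cylinder_asymptotics[of "Suc t"] constant_cylinder_asymptotics[of t] that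
      by (intro tendsto_divide) (simp_all add: s_def c_def W_def)
    then show ?thesis
      using W by (simp add: r_def comp_def)
  qed
  have c: "c 0 = real N" "c 1 = p g + (real N - 1) * p h" "c 2 = 2 * p g * p h + (real N - 2) * p h ^ 2"
    unfolding c_def using defect_prefix_weights[OF N_ge] by simp_all
  have "0 < c 0" "0 < c 1"
    using c N_ge p_pos[of g] p_pos[of h] by (simp_all add: add_pos_nonneg)
  moreover have "c 1 ^ 2 \<noteq> c 0 * c 2"
    unfolding c using h_max[OF g_ne_h] by (intro defect_weights_not_geometric) simp
  then have "c 1 / c 0 \<noteq> c 2 / c 1"
    using \<open>0 < c 0\<close> \<open>0 < c 1\<close> by (simp add: frac_eq_eq power2_eq_square mult.commute)
  ultimately have "\<not> convergent r"
    using N_ge ratio[of 0] ratio[of 1]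
    by (intro not_convergent_two_limits[where \<sigma> = "\<lambda>q. q * N + 1" and \<tau> = "\<lambda>q. q * N + 2"])
      (auto simp: strict_mono_Suc_iff numeral_2_eq_2)
  then show ?thesis
    by (simp add: r_def[abs_def])
qed

end

lemma P0_ratio_not_convergent:
  assumes h_max: "\<And>y. y \<noteq> h \<Longrightarrow> p y < p h" and "p h < 1"
  shows "\<exists>s. \<not> convergent (\<lambda>n. measure P0 (cyl_of (\<lambda>_. s) (Suc n)) / measure P0 (cyl_of (\<lambda>_. s) n))"
proof -
  have "UNIV \<noteq> {h}"
  proof
    assume single: "UNIV = {h}"
    have "(\<Sum>g\<in>UNIV. p g) = p h"
      unfolding single by simp
    with p_sum \<open>p h < 1\<close> show False
      by simp
  qed
  then obtain g where "g \<noteq> h" "\<And>y. y \<noteq> h \<Longrightarrow> p y \<le> p g"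
    by (rule second_heaviest[where p = p]) blast
  then show ?thesis
    using constant_sequence_ratio_not_convergent[OF h_max] by blast
qed

end

theorem theorem7:
  fixes p :: "'g::{finite, ab_group_add} \<Rightarrow> real"
    and P :: "(nat \<Rightarrow> 'g) measure"
    and N :: nat
  assumes p_pos: "\<And>g. 0 < p g" and p_lt1: "\<And>g. p g < 1"
    and p_sum: "(\<Sum>g\<in>UNIV. p g) = 1"
    and P_sets: "sets P = sets SeqSp"
    and P_prob: "prob_space P"
    and P_bern: "\<And>gs. measure P (cylinder gs) = (\<Prod>j<length gs. p (gs ! j))"
    and N_ge: "N \<ge> 2"
  defines "P0 \<equiv> distr P SeqSp (block_sum N)"
  shows "distr P0 SeqSp shift = P0 \<and> psi_mixing P0 \<and>
         ((\<exists>h. \<forall>g. g \<noteq> h \<longrightarrow> p g < p h) \<longrightarrow>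
           (\<exists>s. \<not> convergent (\<lambda>n. measure P0 (cyl_of (\<lambda>_. s) (Suc n))
                                    / measure P0 (cyl_of (\<lambda>_. s) n))))"
proof -
  have "bernoulli p P"
    by (rule bernoulli.intro) (fact p_pos p_sum P_sets P_prob P_bern)+
  then interpret block_sum_group p P N
    by (intro block_sum_group.intro block_sum_group_axioms.intro) (simp_all add: block_sum_process_def N_ge)
  show ?thesis
    unfolding P0_def using P0_shift_invariant P0_psi_mixing P0_ratio_not_convergent p_lt1 by blast
qed

end
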